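(* For any integer $m>3$: (1) $|V(J'(m,2))|=\binom{m}{2}+m$; (2) $\operatorname{cc}(J'(m,2))=m$; (3) $Z_+(J'(m,2))=\binom{m}{2}$; (4) $Z_+(J'(m,2))=|V(J'(m,2))|-\operatorname{cc}(J'(m,2))$.
   Context: $J'(m,2)$ is the graph whose vertices are all the sets $\{i,j\}$ ($i\ne j$) and $\{i\}$ with $i,j\in\{1,\dots,m\}$, two vertices being adjacent iff the sets have non-empty intersection. $\operatorname{cc}(G)$ is the minimum number of cliques needed to cover all edges of $G$. $Z_+(G)$ is the positive zero forcing number: the minimum size of a set $B$ of initially black vertices such that repeated application of the rule "let $W_1,\dots,W_k$ be the vertex sets of components of $G$ minus the black vertices; a black vertex $u$ whose only white neighbour in the subgraph induced by $W_i\cup(\text{black vertices})$ is $w$ may turn $w$ black" eventually makes all vertices black. *)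

theory Defs
  imports Main
begin

text \<open>Finite simple graphs are represented by a vertex set V and an adjacency
  predicate adj; only adj restricted to V matters. All notions below are
  stated relative to (V, adj) and use adjacency between distinct vertices only.\<close>

definition edges :: "'a set \<Rightarrow> ('a \<Rightarrow> 'a \<Rightarrow> bool) \<Rightarrow> 'a set set" where
  "edges V adj = {{u, v} | u v. u \<in> V \<and> v \<in> V \<and> u \<noteq> v \<and> adj u v}"

definition is_clique :: "'a set \<Rightarrow> ('a \<Rightarrow> 'a \<Rightarrow> bool) \<Rightarrow> 'a set \<Rightarrow> bool" where
  "is_clique V adj K \<longleftrightarrow> K \<subseteq> V \<and> (\<forall>u\<in>K. \<forall>v\<in>K. u \<noteq> v \<longrightarrow> adj u v)"

definition clique_cover_number :: "'a set \<Rightarrow> ('a \<Rightarrow> 'a \<Rightarrow> bool) \<Rightarrow> nat" where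
  "clique_cover_number V adj =
     (LEAST k. \<exists>C. finite C \<and> card C = k \<and> (\<forall>K\<in>C. is_clique V adj K) \<and>
                  (\<forall>e\<in>edges V adj. \<exists>K\<in>C. e \<subseteq> K))"

definition white_component :: "'a set \<Rightarrow> ('a \<Rightarrow> 'a \<Rightarrow> bool) \<Rightarrow> 'a set \<Rightarrow> 'a \<Rightarrow> 'a set" where
  "white_component V adj B w =
     {x. (\<lambda>a b. a \<in> V - B \<and> b \<in> V - B \<and> a \<noteq> b \<and> adj a b)\<^sup>*\<^sup>* w x \<and> x \<in> V - B}"

text \<open>Positive semidefinite (positive zero forcing) colour change rule:
  black u forces white w if, in the subgraph induced by W \<union> B where W is the
  component of G - B containing w, w is the only white neighbour of u.\<close>
definition psd_force :: "'a set \<Rightarrow> ('a \<Rightarrow> 'a \<Rightarrow> bool) \<Rightarrow> 'a set \<Rightarrow> 'a \<Rightarrow> 'a \<Rightarrow> bool" where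
  "psd_force V adj B u w \<longleftrightarrow> u \<in> B \<and> w \<in> V - B \<and>
     {x \<in> white_component V adj B w. x \<noteq> u \<and> adj u x} = {w}"

inductive psd_reach :: "'a set \<Rightarrow> ('a \<Rightarrow> 'a \<Rightarrow> bool) \<Rightarrow> 'a set \<Rightarrow> 'a set \<Rightarrow> bool"
  for V adj where
  refl: "psd_reach V adj B B"
| step: "psd_reach V adj B0 B \<Longrightarrow> psd_force V adj B u w \<Longrightarrow> psd_reach V adj B0 (insert w B)"

definition psd_forcing_set :: "'a set \<Rightarrow> ('a \<Rightarrow> 'a \<Rightarrow> bool) \<Rightarrow> 'a set \<Rightarrow> bool" where
  "psd_forcing_set V adj B \<longleftrightarrow> B \<subseteq> V \<and> psd_reach V adj B V"

definition Zplus :: "'a set \<Rightarrow> ('a \<Rightarrow> 'a \<Rightarrow> bool) \<Rightarrow> nat" where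
  "Zplus V adj = (LEAST k. \<exists>B. psd_forcing_set V adj B \<and> card B = k)"

definition Jp_vertices :: "nat \<Rightarrow> nat set set" where
  "Jp_vertices m = {S. S \<subseteq> {1..m} \<and> (card S = 1 \<or> card S = 2)}"

definition Jp_adj :: "nat set \<Rightarrow> nat set \<Rightarrow> bool" where
  "Jp_adj S T \<longleftrightarrow> S \<noteq> T \<and> S \<inter> T \<noteq> {}"

end

theory Submission
  imports Defs
begin

text \<open>The stars \<open>{S. i \<in> S}\<close> form an edge clique cover with m cliques, and no clique
  contains two singletons, so m cliques are needed. For Z+, the 2-sets are a
  forcing set: each singleton \<open>{k}\<close> is then an isolated white vertex, forced by any
  black pair through k. Conversely, call a point open if some white vertex contains it.
  When u forces w through a point \<open>i \<in> u \<inter> w\<close>, every white vertex containing i is adjacent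
  to both u and w, hence equals w; so i stops being open. Thus the number of black
  vertices plus the number of open points never increases, and a forcing set B satisfies
  \<open>|V| \<le> |B| + m\<close>, i.e. \<open>|B| \<ge> m choose 2\<close>.\<close>

lemma psd_reach_subset:
  assumes "psd_reach V adj B0 B" "B0 \<subseteq> V"
  shows "B \<subseteq> V"
  using assms by induction (auto simp: psd_force_def)

lemma white_component_isolated:
  assumes "w \<in> V - B" "\<And>x. x \<in> V - B \<Longrightarrow> x \<noteq> w \<Longrightarrow> \<not> adj w x"
  shows "white_component V adj B w = {w}"
proof -
  let ?R = "\<lambda>a b. a \<in> V - B \<and> b \<in> V - B \<and> a \<noteq> b \<and> adj a b"
  have "x = w" if "?R\<^sup>*\<^sup>* w x" for x
    using that by (rule converse_rtranclpE) (use assms(2) in auto)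
  then show ?thesis
    unfolding white_component_def using assms(1) by auto
qed

lemma psd_force_isolated:
  assumes "u \<in> B" "w \<in> V - B" "adj u w"
    and "\<And>x. x \<in> V - B \<Longrightarrow> x \<noteq> w \<Longrightarrow> \<not> adj w x"
  shows "psd_force V adj B u w"
proof -
  have "white_component V adj B w = {w}"
    using assms(2,4) by (rule white_component_isolated)
  with assms(1-3) show ?thesis unfolding psd_force_def by auto
qed

lemma edgesI: "u \<in> V \<Longrightarrow> v \<in> V \<Longrightarrow> u \<noteq> v \<Longrightarrow> adj u v \<Longrightarrow> {u, v} \<in> edges V adj"
  unfolding edges_def by blast

lemma Zplus_eqI:
  assumes "psd_forcing_set V adj B" "card B = k"
    and "\<And>B'. psd_forcing_set V adj B' \<Longrightarrow> k \<le> card B'"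
  shows "Zplus V adj = k"
  unfolding Zplus_def by (rule Least_equality) (use assms in auto)

lemma clique_cover_number_eqI:
  assumes "finite C" "card C = k" "\<forall>K\<in>C. is_clique V adj K" "\<forall>e\<in>edges V adj. \<exists>K\<in>C. e \<subseteq> K"
    and "\<And>C'. finite C' \<Longrightarrow> \<forall>K\<in>C'. is_clique V adj K \<Longrightarrow> \<forall>e\<in>edges V adj. \<exists>K\<in>C'. e \<subseteq> K
          \<Longrightarrow> k \<le> card C'"
  shows "clique_cover_number V adj = k"
  unfolding clique_cover_number_def
proof (rule Least_equality)
  show "\<exists>C. finite C \<and> card C = k \<and> (\<forall>K\<in>C. is_clique V adj K) \<and> (\<forall>e\<in>edges V adj. \<exists>K\<in>C. e \<subseteq> K)"
    using assms(1-4) by blast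
qed (use assms(5) in blast)

definition Jp_pairs :: "nat \<Rightarrow> nat set set" where
  "Jp_pairs m = {S. S \<subseteq> {1..m} \<and> card S = 2}"

lemma Jp_vertices_eq: "Jp_vertices m = Jp_pairs m \<union> (\<lambda>i. {i}) ` {1..m}"
  unfolding Jp_vertices_def Jp_pairs_def by (auto simp: card_Suc_eq)

lemma finite_Jp_vertices: "finite (Jp_vertices m)"
  by (simp add: Jp_vertices_eq Jp_pairs_def)

lemma card_Jp_pairs: "card (Jp_pairs m) = m choose 2"
  unfolding Jp_pairs_def by (simp add: n_subsets)

lemma card_Jp_vertices: "card (Jp_vertices m) = (m choose 2) + m"
proof -
  have "card (Jp_vertices m) = card (Jp_pairs m) + card ((\<lambda>i. {i}) ` {1..m})"
    unfolding Jp_vertices_eq by (rule card_Un_disjoint) (auto simp: Jp_pairs_def)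
  also have "card ((\<lambda>i. {i}) ` {1..m}) = m"
    by (subst card_image) (auto intro: inj_onI)
  finally show ?thesis by (simp add: card_Jp_pairs)
qed

lemma singleton_in_Jp_vertices: "i \<in> {1..m} \<Longrightarrow> {i} \<in> Jp_vertices m"
  by (simp add: Jp_vertices_def)

lemma pair_in_Jp_pairs: "i \<in> {1..m} \<Longrightarrow> j \<in> {1..m} \<Longrightarrow> i \<noteq> j \<Longrightarrow> {i, j} \<in> Jp_pairs m"
  by (simp add: Jp_pairs_def)

lemma obtain_other_point:
  fixes m i :: nat
  assumes "m \<ge> 2" "i \<in> {1..m}"
  obtains j where "j \<in> {1..m}" "j \<noteq> i"
proof (cases "i = 1")
  case True
  with assms(1) show ?thesis by (intro that[of 2]) auto
next
  case False
  with assms(2) show ?thesis by (intro that[of 1]) auto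
qed

definition Jp_star :: "nat \<Rightarrow> nat \<Rightarrow> nat set set" where
  "Jp_star m i = {S \<in> Jp_vertices m. i \<in> S}"

lemma is_clique_Jp_star: "is_clique (Jp_vertices m) Jp_adj (Jp_star m i)"
  unfolding is_clique_def Jp_star_def Jp_adj_def by auto

lemma edge_in_Jp_star:
  assumes "e \<in> edges (Jp_vertices m) Jp_adj"
  shows "\<exists>i\<in>{1..m}. e \<subseteq> Jp_star m i"
proof -
  obtain S T where e: "e = {S, T}" "S \<in> Jp_vertices m" "T \<in> Jp_vertices m" "Jp_adj S T"
    using assms unfolding edges_def by auto
  then obtain i where "i \<in> S" "i \<in> T" unfolding Jp_adj_def by auto
  moreover have "i \<in> {1..m}" using e(2) \<open>i \<in> S\<close> unfolding Jp_vertices_def by auto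
  ultimately show ?thesis using e unfolding Jp_star_def by auto
qed

lemma card_Jp_stars: "card (Jp_star m ` {1..m}) = m"
proof -
  have "inj_on (Jp_star m) {1..m}"
  proof (rule inj_onI)
    fix i j assume i: "i \<in> {1..m}" and eq: "Jp_star m i = Jp_star m j"
    have "{i} \<in> Jp_star m i"
      using i by (simp add: Jp_star_def singleton_in_Jp_vertices)
    then show "i = j" unfolding eq by (simp add: Jp_star_def)
  qed
  then show ?thesis by (simp add: card_image)
qed

lemma clique_cover_card_ge:
  assumes "m \<ge> 2" "finite C" "\<forall>K\<in>C. is_clique (Jp_vertices m) Jp_adj K"
    and "\<forall>e\<in>edges (Jp_vertices m) Jp_adj. \<exists>K\<in>C. e \<subseteq> K"
  shows "m \<le> card C"
proof -
  have covered: "\<exists>K\<in>C. {i} \<in> K" if i: "i \<in> {1..m}" for i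
  proof -
    obtain j where j: "j \<in> {1..m}" "j \<noteq> i" using obtain_other_point[OF assms(1) i] .
    have "{i} \<in> Jp_vertices m" "{i, j} \<in> Jp_vertices m" "{i} \<noteq> {i, j}" "Jp_adj {i} {i, j}"
      using i j by (auto simp: Jp_vertices_def Jp_adj_def)
    then have "{{i}, {i, j}} \<in> edges (Jp_vertices m) Jp_adj"
      by (rule edgesI)
    from bspec[OF assms(4) this] show ?thesis by blast
  qed
  define f where "f i = (SOME K. K \<in> C \<and> {i} \<in> K)" for i
  have f: "f i \<in> C" "{i} \<in> f i" if "i \<in> {1..m}" for i
    using someI_ex[OF covered[OF that, unfolded Bex_def]] unfolding f_def by auto
  \<comment> \<open>Distinct singletons are not adjacent, so each clique contains at most one of them.\<close>
  have "inj_on f {1..m}"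
  proof (rule inj_onI, rule ccontr)
    fix i j assume ij: "i \<in> {1..m}" "j \<in> {1..m}" "f i = f j" "i \<noteq> j"
    have "is_clique (Jp_vertices m) Jp_adj (f i)" "{i} \<in> f i" "{j} \<in> f i"
      using f ij assms(3) by auto
    then have "Jp_adj {i} {j}"
      using \<open>i \<noteq> j\<close> unfolding is_clique_def by blast
    with \<open>i \<noteq> j\<close> show False unfolding Jp_adj_def by auto
  qed
  then have "card {1..m} \<le> card C"
    using card_inj_on_le[of f "{1..m}" C] f(1) assms(2) by blast
  then show ?thesis by simp
qed

lemma clique_cover_number_Jp:
  assumes "m \<ge> 2"
  shows "clique_cover_number (Jp_vertices m) Jp_adj = m"
proof (rule clique_cover_number_eqI)
  show "finite (Jp_star m ` {1..m})" by simp
  show "card (Jp_star m ` {1..m}) = m" by (rule card_Jp_stars)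
  show "\<forall>K\<in>Jp_star m ` {1..m}. is_clique (Jp_vertices m) Jp_adj K"
    using is_clique_Jp_star by blast
  show "\<forall>e\<in>edges (Jp_vertices m) Jp_adj. \<exists>K\<in>Jp_star m ` {1..m}. e \<subseteq> K"
  proof
    fix e assume "e \<in> edges (Jp_vertices m) Jp_adj"
    then obtain i where "i \<in> {1..m}" "e \<subseteq> Jp_star m i" using edge_in_Jp_star by blast
    then show "\<exists>K\<in>Jp_star m ` {1..m}. e \<subseteq> K" by blast
  qed
qed (rule clique_cover_card_ge[OF assms])

definition open_points :: "nat \<Rightarrow> nat set set \<Rightarrow> nat set" where
  "open_points m B = {i \<in> {1..m}. \<exists>S \<in> Jp_vertices m - B. i \<in> S}"

lemma psd_force_closes_point:
  assumes "psd_force (Jp_vertices m) Jp_adj B u w"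
  shows "open_points m (insert w B) \<subset> open_points m B"
proof -
  let ?V = "Jp_vertices m"
  have u: "u \<in> B" and w: "w \<in> ?V" "w \<notin> B"
    and only_w: "{x \<in> white_component ?V Jp_adj B w. x \<noteq> u \<and> Jp_adj u x} = {w}"
    using assms unfolding psd_force_def by auto
  then obtain i where iu: "i \<in> u" and iw: "i \<in> w" unfolding Jp_adj_def by blast
  have "i \<in> {1..m}" using w(1) iw unfolding Jp_vertices_def by auto
  then have i_open: "i \<in> open_points m B"
    unfolding open_points_def using w iw by blast
  have i_closed: "i \<notin> open_points m (insert w B)"
  proof
    assume "i \<in> open_points m (insert w B)"
    then obtain T where T: "T \<in> ?V" "T \<notin> B" "T \<noteq> w" "i \<in> T"
      unfolding open_points_def by auto
    have "T \<in> white_component ?V Jp_adj B w"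
      unfolding white_component_def using T w iw by (auto simp: Jp_adj_def)
    moreover have "T \<noteq> u" using u T by auto
    moreover have "Jp_adj u T" using iu T \<open>T \<noteq> u\<close> unfolding Jp_adj_def by auto
    ultimately have "T = w" using only_w by blast
    with T show False by simp
  qed
  have "open_points m (insert w B) \<subseteq> open_points m B"
    unfolding open_points_def by auto
  with i_open i_closed show ?thesis by blast
qed

lemma psd_reach_potential_le:
  assumes "psd_reach (Jp_vertices m) Jp_adj B0 B" "B0 \<subseteq> Jp_vertices m"
  shows "card B + card (open_points m B) \<le> card B0 + card (open_points m B0)"
  using assms
proof induction
  case (step B0 B u w)
  have "finite B"
    using psd_reach_subset[OF step.hyps(1) step.prems] finite_Jp_vertices by (rule finite_subset)
  moreover have "w \<notin> B" using step.hyps(2) unfolding psd_force_def by simp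
  moreover have "finite (open_points m B)" by (simp add: open_points_def)
  then have "card (open_points m (insert w B)) < card (open_points m B)"
    using psd_force_closes_point[OF step.hyps(2)] by (rule psubset_card_mono)
  ultimately show ?case using step.IH step.prems by simp
qed simp

lemma psd_forcing_set_card_ge:
  assumes "psd_forcing_set (Jp_vertices m) Jp_adj B"
  shows "m choose 2 \<le> card B"
proof -
  have B: "psd_reach (Jp_vertices m) Jp_adj B (Jp_vertices m)" "B \<subseteq> Jp_vertices m"
    using assms unfolding psd_forcing_set_def by auto
  have "card (open_points m B) \<le> card {1..m}"
    by (rule card_mono) (auto simp: open_points_def)
  then show ?thesis
    using psd_reach_potential_le[OF B] card_Jp_vertices[of m] by simp
qed

lemma psd_reach_singletons:
  assumes "m \<ge> 2" "finite A" "A \<subseteq> {1..m}"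
  shows "psd_reach (Jp_vertices m) Jp_adj (Jp_pairs m) (Jp_pairs m \<union> (\<lambda>i. {i}) ` A)"
  using assms(2,3)
proof (induction A rule: finite_induct)
  case empty
  show ?case by (simp add: psd_reach.refl)
next
  case (insert k A)
  let ?B = "Jp_pairs m \<union> (\<lambda>i. {i}) ` A"
  have k: "k \<in> {1..m}" using insert.prems by simp
  obtain k' where k': "k' \<in> {1..m}" "k' \<noteq> k" using obtain_other_point[OF assms(1) k] .
  have white: "{k} \<in> Jp_vertices m - ?B"
    using k insert.hyps(2) by (auto simp: singleton_in_Jp_vertices Jp_pairs_def)
  \<comment> \<open>All other vertices through k are pairs, which are black.\<close>
  have isolated: "\<not> Jp_adj {k} x" if "x \<in> Jp_vertices m - ?B" "x \<noteq> {k}" for x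
    using that unfolding Jp_adj_def Jp_vertices_def Jp_pairs_def by (auto simp: card_Suc_eq)
  have "psd_force (Jp_vertices m) Jp_adj ?B {k, k'} {k}"
  proof (rule psd_force_isolated)
    show "{k, k'} \<in> ?B" using pair_in_Jp_pairs[OF k k'(1) k'(2)[symmetric]] by blast
    show "Jp_adj {k, k'} {k}" using k'(2) by (auto simp: Jp_adj_def)
  qed (fact white, rule isolated)
  have "psd_reach (Jp_vertices m) Jp_adj (Jp_pairs m) ?B"
    using insert.IH insert.prems by simp
  from psd_reach.step[OF this \<open>psd_force _ _ _ _ _\<close>] show ?case by simp
qed

lemma psd_forcing_set_Jp_pairs:
  assumes "m \<ge> 2"
  shows "psd_forcing_set (Jp_vertices m) Jp_adj (Jp_pairs m)"
  using psd_reach_singletons[OF assms, of "{1..m}"]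
  unfolding psd_forcing_set_def Jp_vertices_eq by auto

lemma Zplus_Jp:
  assumes "m \<ge> 2"
  shows "Zplus (Jp_vertices m) Jp_adj = m choose 2"
  by (rule Zplus_eqI[OF psd_forcing_set_Jp_pairs[OF assms] card_Jp_pairs psd_forcing_set_card_ge])

theorem mainTheorem14:
  fixes m :: nat
  assumes "m > 3"
  shows "card (Jp_vertices m) = (m choose 2) + m \<and>
         clique_cover_number (Jp_vertices m) Jp_adj = m \<and>
         Zplus (Jp_vertices m) Jp_adj = m choose 2 \<and>
         Zplus (Jp_vertices m) Jp_adj = card (Jp_vertices m) - clique_cover_number (Jp_vertices m) Jp_adj"
proof -
  have "m \<ge> 2" using assms by simp
  then show ?thesis
    using card_Jp_vertices[of m] clique_cover_number_Jp Zplus_Jp by simp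
qed

end
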